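(* Let $\{p_n\}_{n\geq 1}$ be the sequence of ordinary prime numbers and let $N\geq 1$ be an integer. Then for (Lebesgue-)almost every choice $(q_1,\dots,q_N)\in(1,\infty)^N$, the set $q=\{p_n\}_{n\geq1}\cup\{q_j\}_{j=1}^N$ is a system of Beurling primes and the Beurling integers $\{\nu_n\}_{n\geq1}$ generated by $q$ satisfy Bohr's condition: there exist $c_1,c_2>0$ such that $$\nu_{n+1}-\nu_n\geq c_1\,\nu_{n+1}^{-c_2},\qquad n\in\mathbb{N}.$$
   Context: A system of Beurling primes is an increasing sequence (finite or infinite) $q=\{q_n\}$ of real numbers with $q_n>1$ (and $q_n\to\infty$ if infinite) such that $\{\log q_n\}$ is linearly independent over $\mathbb{Q}$. The Beurling integers $\mathbb{N}_q=\{\nu_n\}_{n\geq1}$ are all numbers that can be written as finite products of elements of $q$ (including the empty product $\nu_1=1$), listed in increasing order; by linear independence each has a unique such representation. *)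

theory Defs
  imports "HOL-Analysis.Analysis" "HOL-Computational_Algebra.Primes"
begin

text \<open>A system of Beurling primes, given as a family g indexed by a set I
 (the increasing sequence q_n is the family listed in increasing order):
 every g i > 1, the family tends to infinity (only finitely many members below
 any bound), and the logarithms ln (g i) are linearly independent over Q.\<close>
definition beurling_prime_system :: "'i set \<Rightarrow> ('i \<Rightarrow> real) \<Rightarrow> bool" where
  "beurling_prime_system I g \<longleftrightarrow>
     (\<forall>i\<in>I. g i > 1) \<and>
     (\<forall>T. finite {i\<in>I. g i \<le> T}) \<and>
     (\<forall>F c. finite F \<longrightarrow> F \<subseteq> I \<longrightarrow>
        (\<Sum>i\<in>F. of_rat (c i) * ln (g i)) = 0 \<longrightarrow> (\<forall>i\<in>F. c i = (0::rat)))"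

definition beurling_integers :: "'i set \<Rightarrow> ('i \<Rightarrow> real) \<Rightarrow> real set" where
  "beurling_integers I g =
     {\<Prod>i\<in>F. g i ^ k i | F k. finite F \<and> F \<subseteq> I}"

text \<open>The n-th Beurling integer (n \<ge> 1), listing the Beurling integers in
 increasing order: the unique one having exactly n - 1 Beurling integers below it.\<close>
definition beurling_nu :: "'i set \<Rightarrow> ('i \<Rightarrow> real) \<Rightarrow> nat \<Rightarrow> real" where
  "beurling_nu I g n =
     (THE b. b \<in> beurling_integers I g \<and>
             card {a \<in> beurling_integers I g. a < b} = n - 1)"

definition bohr_condition :: "'i set \<Rightarrow> ('i \<Rightarrow> real) \<Rightarrow> bool" where
  "bohr_condition I g \<longleftrightarrow>
     (\<exists>c1 c2. c1 > 0 \<and> c2 > 0 \<and>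
        (\<forall>n\<ge>1. beurling_nu I g (Suc n) - beurling_nu I g n
                 \<ge> c1 * beurling_nu I g (Suc n) powr (- c2)))"

definition primes_plus_index :: "(nat + 'n) set" where
  "primes_plus_index = Inl ` {p. prime p} \<union> Inr ` UNIV"

definition primes_plus :: "real ^ 'n \<Rightarrow> nat + 'n \<Rightarrow> real" where
  "primes_plus x j = (case j of Inl p \<Rightarrow> real p | Inr i \<Rightarrow> x $ i)"

end

theory Submission
  imports Defs
begin

text \<open>A Beurling integer of the extended system is m x^a with m a positive integer and x^a a
  monomial in the extra generators, so both properties come down to lower bounds for binomials
  m x^a - m' x^b in which some variable occurs in the first monomial only. Along that variable the
  binomial is expanding, so by Fubini the set of x in a box where it is smaller than e has measure
  O(e). Weighting each binomial by a negative power of its height makes the weights summable, and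
  Borel--Cantelli shows that for almost every x no such binomial vanishes and only finitely many
  are smaller than their weight; hence all of them are bounded below by a constant times their
  weight. Nonvanishing, together with unique factorisation in the integers, gives the linear
  independence of the logarithms. For two consecutive Beurling integers, cancelling the common
  monomial factor leaves such a binomial (or a positive integer multiple of a monomial) whose
  height is polynomial in their size, which is Bohr's condition.\<close>

section \<open>Measure estimates\<close>

lemma power_diff_ge_diff:
  fixes s t :: real
  assumes "1 \<le> s" "s \<le> t" "n \<ge> 1"
  shows "t - s \<le> t ^ n - s ^ n"
  using assms(3)
proof (induction n rule: dec_induct)
  case (step n)
  have "s ^ n \<ge> 1" "s ^ n \<le> t ^ n" using assms by (simp_all add: one_le_power power_mono)
  have "t * (t ^ n - s ^ n) \<ge> t ^ n - s ^ n" "s ^ n * (t - s) \<ge> t - s"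
    using assms \<open>s ^ n \<ge> 1\<close> \<open>s ^ n \<le> t ^ n\<close> by (simp_all add: mult_le_cancel_right1)
  moreover have "t ^ Suc n - s ^ Suc n = t * (t ^ n - s ^ n) + s ^ n * (t - s)"
    by (simp add: algebra_simps)
  ultimately show ?case using \<open>s ^ n \<le> t ^ n\<close> by linarith
qed simp

lemma dist_le_dist_scaled_power:
  fixes s t c :: real
  assumes "1 \<le> s" "1 \<le> t" "1 \<le> c" "n \<ge> 1"
  shows "\<bar>t - s\<bar> \<le> \<bar>c * t ^ n - c * s ^ n\<bar>"
proof -
  have *: "b - a \<le> c * b ^ n - c * a ^ n" if "1 \<le> a" "a \<le> b" for a b :: real
  proof -
    have "b - a \<le> b ^ n - a ^ n" using power_diff_ge_diff that assms(4) by blast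
    also have "\<dots> \<le> c * (b ^ n - a ^ n)"
      using assms(3) \<open>b - a \<le> b ^ n - a ^ n\<close> that by (simp add: mult_le_cancel_right1)
    finally show ?thesis by (simp add: algebra_simps)
  qed
  show ?thesis using *[of s t] *[of t s] assms by (cases "s \<le> t") auto
qed

lemma emeasure_scaled_power_near_level:
  fixes c C d e :: real
  assumes "1 \<le> c" "n \<ge> 1" "e > 0"
  shows "emeasure lborel {y. 1 \<le> d + y \<and> \<bar>c * (d + y) ^ n - C\<bar> < e} \<le> ennreal (4 * e)"
    (is "emeasure lborel ?S \<le> _")
proof (cases "?S = {}")
  case False
  then obtain y0 where y0: "1 \<le> d + y0" "\<bar>c * (d + y0) ^ n - C\<bar> < e" by auto
  have "?S \<subseteq> {y0 - 2 * e .. y0 + 2 * e}"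
  proof
    fix y assume y: "y \<in> ?S"
    have "\<bar>(d + y) - (d + y0)\<bar> \<le> \<bar>c * (d + y) ^ n - c * (d + y0) ^ n\<bar>"
      using y y0 assms by (intro dist_le_dist_scaled_power) auto
    then show "y \<in> {y0 - 2 * e .. y0 + 2 * e}" using y y0 by auto
  qed
  then have "emeasure lborel ?S \<le> emeasure lborel {y0 - 2 * e .. y0 + 2 * e}"
    by (intro emeasure_mono) auto
  then show ?thesis using assms by simp
next
  case True
  then show ?thesis by (simp only: emeasure_empty zero_le)
qed

lemma sum_Basis_fun_upd:
  fixes f :: "'a::euclidean_space \<Rightarrow> real"
  assumes "i \<in> Basis"
  shows "(\<Sum>b\<in>Basis. (f(i := y)) b *\<^sub>R b) = (\<Sum>b\<in>Basis - {i}. f b *\<^sub>R b) + y *\<^sub>R i"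
proof -
  have "(\<Sum>b\<in>Basis - {i}. (f(i := y)) b *\<^sub>R b) = (\<Sum>b\<in>Basis - {i}. f b *\<^sub>R b)"
    by (rule sum.cong) auto
  then show ?thesis using assms by (simp add: sum.remove)
qed

lemma inner_sum_Basis:
  fixes f :: "'a::euclidean_space \<Rightarrow> real"
  assumes "b \<in> Basis"
  shows "(\<Sum>b'\<in>Basis. f b' *\<^sub>R b') \<bullet> b = f b"
  using assms by (simp add: inner_sum_left inner_Basis if_distrib cong: if_cong)

lemma emeasure_le_by_lines:
  fixes E :: "'a::euclidean_space set" and c R :: real
  assumes E[measurable]: "E \<in> sets borel" and i: "i \<in> Basis" and "R \<ge> 0" "c \<ge> 0"
    and box: "\<And>x b. x \<in> E \<Longrightarrow> b \<in> Basis \<Longrightarrow> b \<noteq> i \<Longrightarrow> 0 \<le> x \<bullet> b \<and> x \<bullet> b \<le> R"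
    and lines: "\<And>x. emeasure lborel {y. x + y *\<^sub>R i \<in> E} \<le> ennreal c"
  shows "emeasure lborel E \<le> ennreal (c * R ^ (DIM('a) - 1))"
proof -
  interpret product_sigma_finite "\<lambda>_. lborel :: real measure" by standard
  define P where "P = (Pi\<^sub>M (Basis::'a set) (\<lambda>_. lborel :: real measure))"
  define Q where "Q = (Pi\<^sub>M (Basis - {i}) (\<lambda>_. lborel :: real measure))"
  define g where "g = (\<lambda>f. \<Sum>b\<in>Basis. f b *\<^sub>R b :: 'a)"
  define S where "S = g -` E \<inter> space P"
  have [measurable]: "g \<in> borel_measurable P" unfolding g_def P_def by measurable
  have Sm: "S \<in> sets P" unfolding S_def by measurable
  have "emeasure lborel E = emeasure (distr P borel g) E"
    unfolding P_def g_def by (simp add: lborel_eq[symmetric])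
  also have "\<dots> = emeasure P S"
    unfolding S_def by (subst emeasure_distr) auto
  also have "\<dots> = (\<integral>\<^sup>+f. (\<integral>\<^sup>+y. indicator S (f(i := y)) \<partial>lborel) \<partial>Q)"
    using product_nn_integral_insert[of "Basis - {i}" i "indicator S"] Sm i
    by (simp add: P_def Q_def insert_absorb)
  also have "\<dots> \<le> (\<integral>\<^sup>+f. ennreal c * indicator (Pi\<^sub>E (Basis - {i}) (\<lambda>_. {0..R})) f \<partial>Q)"
  proof (rule nn_integral_mono)
    fix f assume f: "f \<in> space Q"
    define x0 where "x0 = (\<Sum>b\<in>Basis - {i}. f b *\<^sub>R b :: 'a)"
    have "f(i := y) \<in> space P" for y
      using f i unfolding P_def Q_def by (auto simp: space_PiM PiE_def extensional_def)
    moreover have "g (f(i := y)) = x0 + y *\<^sub>R i" for y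
      unfolding g_def x0_def using sum_Basis_fun_upd[OF i] .
    ultimately have ind: "indicator S (f(i := y)) = (indicator {y. x0 + y *\<^sub>R i \<in> E} y :: ennreal)"
      for y by (auto simp: S_def indicator_def)
    show "(\<integral>\<^sup>+y. indicator S (f(i := y)) \<partial>lborel)
          \<le> ennreal c * indicator (Pi\<^sub>E (Basis - {i}) (\<lambda>_. {0..R})) f"
    proof (cases "f \<in> Pi\<^sub>E (Basis - {i}) (\<lambda>_. {0..R})")
      case True
      have "{y. x0 + y *\<^sub>R i \<in> E} \<in> sets lborel" by measurable
      then show ?thesis using True lines[of x0] by (simp add: ind)
    next
      case False
      then obtain b where b: "b \<in> Basis - {i}" "f b \<notin> {0..R}"
        using f by (auto simp: Q_def space_PiM PiE_def Pi_def)
      have "g (f(i := y)) \<notin> E" for y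
        using box[of "g (f(i := y))" b] b inner_sum_Basis[of b "f(i := y)"] by (auto simp: g_def)
      then show ?thesis by (simp add: S_def indicator_def)
    qed
  qed
  also have "\<dots> = ennreal c * emeasure Q (Pi\<^sub>E (Basis - {i}) (\<lambda>_. {0..R}))"
    by (rule nn_integral_cmult_indicator) (auto simp: Q_def intro!: sets_PiM_I_finite)
  also have "\<dots> = ennreal (c * R ^ (DIM('a) - 1))"
    using assms by (simp add: Q_def emeasure_PiM prod_ennreal ennreal_mult ennreal_power
        card_Diff_singleton)
  finally show ?thesis .
qed

text \<open>Borel--Cantelli, transported to a countable index type along to_nat.\<close>
lemma AE_finite_occurrences:
  fixes A :: "'i::countable \<Rightarrow> 'a set" and w :: "'i \<Rightarrow> real"
  assumes [measurable]: "\<And>i. A i \<in> sets M"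
    and A: "\<And>i. emeasure M (A i) \<le> ennreal (w i)" and w: "\<And>i. w i \<ge> 0"
    and bounded: "\<And>F. finite F \<Longrightarrow> (\<Sum>i\<in>F. w i) \<le> C"
  shows "AE x in M. finite {i. x \<in> A i}"
proof -
  define R where "R = range (to_nat :: 'i \<Rightarrow> nat)"
  define B where "B n = (if n \<in> R then A (from_nat n) else {})" for n
  define v where "v n = (if n \<in> R then w (from_nat n) else 0)" for n
  have [measurable]: "B n \<in> sets M" for n by (simp add: B_def)
  have B: "emeasure M (B n) \<le> ennreal (v n)" for n
    using A[of "from_nat n"] by (simp add: B_def v_def)
  have v: "v n \<ge> 0" for n using w by (simp add: v_def)
  have "summable v"
  proof (rule summableI_nonneg_bounded)
    fix N
    have "(\<Sum>n<N. v n) = (\<Sum>n\<in>{..<N} \<inter> R. w (from_nat n))"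
      by (simp add: v_def sum.inter_restrict)
    also have "\<dots> = (\<Sum>i\<in>to_nat -` {..<N}. w i)"
      by (rule sum.reindex_bij_witness[where i=to_nat and j=from_nat]) (auto simp: R_def)
    also have "\<dots> \<le> C" by (rule bounded) (simp add: finite_vimageI)
    finally show "(\<Sum>n<N. v n) \<le> C" .
  qed (rule v)
  moreover have "norm (measure M (B n)) \<le> v n" for n
    using enn2real_mono[OF B[of n]] v[of n] by (simp add: measure_def)
  ultimately have "summable (\<lambda>n. measure M (B n))"
    by (rule summable_comparison_test')
  moreover have "emeasure M (B n) < \<infinity>" for n using B[of n] by (simp add: le_less_trans)
  ultimately have "AE x in M. eventually (\<lambda>n. x \<in> space M - B n) sequentially"
    by (intro borel_cantelli_AE1) auto
  then show ?thesis
  proof eventually_elim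
    case (elim x)
    then obtain N where N: "\<And>n. n \<ge> N \<Longrightarrow> x \<notin> B n" by (auto simp: eventually_sequentially)
    have "to_nat i < N" if "x \<in> A i" for i
      using N[of "to_nat i"] that by (force simp: B_def R_def)
    then have "{i. x \<in> A i} \<subseteq> to_nat -` {..<N}" by auto
    then show ?case by (rule finite_subset) (simp add: finite_vimageI)
  qed
qed

lemma lower_bound_up_to_finite_exceptions:
  fixes f w :: "'a \<Rightarrow> real"
  assumes fin: "finite {i. P i \<and> f i < w i}" and f: "\<And>i. P i \<Longrightarrow> f i > 0" and w: "\<And>i. w i > 0"
  shows "\<exists>c>0. c \<le> 1 \<and> (\<forall>i. P i \<longrightarrow> c * w i \<le> f i)"
proof (intro exI conjI allI impI)
  define B where "B = {i. P i \<and> f i < w i}"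
  define c where "c = Min (insert 1 ((\<lambda>i. f i / w i) ` B))"
  show "c > 0" unfolding c_def using fin f w by (subst Min_gr_iff) (auto simp: B_def)
  show "c \<le> 1" unfolding c_def using fin by (auto simp: B_def)
  fix i assume "P i"
  show "c * w i \<le> f i"
  proof (cases "i \<in> B")
    case True
    then have "c \<le> f i / w i" unfolding c_def using fin by (auto simp: B_def)
    then show ?thesis using w[of i] by (simp add: pos_le_divide_eq)
  next
    case False
    then have "w i \<le> f i" using \<open>P i\<close> by (auto simp: B_def)
    moreover have "c * w i \<le> w i" using \<open>c \<le> 1\<close> w[of i] by (simp add: mult_le_cancel_right1)
    ultimately show ?thesis by linarith
  qed
qed

section \<open>Binomials in the extra generators\<close>
type_synonym 'n binomial = "nat \<times> nat \<times> ('n \<Rightarrow> nat) \<times> ('n \<Rightarrow> nat)"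

definition vec_monomial :: "real^'n \<Rightarrow> ('n \<Rightarrow> nat) \<Rightarrow> real" where
  "vec_monomial x a = (\<Prod>i\<in>UNIV. x$i ^ a i)"

definition binomial_value :: "real^'n \<Rightarrow> 'n binomial \<Rightarrow> real" where
  "binomial_value x T = (case T of (m, m', a, b) \<Rightarrow> real m * vec_monomial x a - real m' * vec_monomial x b)"

text \<open>Along a variable occurring in the first monomial only, the binomial is expanding.\<close>
definition nondegenerate_binomial :: "'n binomial \<Rightarrow> bool" where
  "nondegenerate_binomial T = (case T of (m, m', a, b) \<Rightarrow> m \<ge> 1 \<and> (\<exists>j. a j > 0 \<and> b j = 0))"

definition near_zero_set :: "real \<Rightarrow> real \<Rightarrow> 'n binomial \<Rightarrow> (real^'n) set" where
  "near_zero_set R e T = {x. (\<forall>i. 1 \<le> x$i \<and> x$i \<le> R) \<and> \<bar>binomial_value x T\<bar> < e}"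

lemma near_zero_set_sets [measurable]: "near_zero_set R e T \<in> sets borel"
  unfolding near_zero_set_def binomial_value_def vec_monomial_def by (cases T) (simp, measurable)

lemma vec_monomial_add: "vec_monomial x (\<lambda>j. a j + b j) = vec_monomial x a * vec_monomial x b"
  unfolding vec_monomial_def by (simp add: power_add prod.distrib)

lemma vec_monomial_ge_1: "(\<And>i. x$i \<ge> 1) \<Longrightarrow> vec_monomial x a \<ge> 1"
  unfolding vec_monomial_def by (intro prod_ge_1) (auto simp: one_le_power)

lemma vec_monomial_ge_power_sum:
  assumes "\<And>i. x$i \<ge> d" "d \<ge> 1"
  shows "d ^ sum a UNIV \<le> vec_monomial x a"
proof -
  have "d ^ sum a UNIV = (\<Prod>i\<in>UNIV. d ^ a i)" by (simp add: power_sum)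
  also have "\<dots> \<le> vec_monomial x a" unfolding vec_monomial_def
    using assms by (intro prod_mono) (auto intro: power_mono)
  finally show ?thesis .
qed

lemma vec_monomial_add_axis:
  "vec_monomial (x + y *\<^sub>R axis j 1) a = (x$j + y) ^ a j * (\<Prod>k\<in>UNIV - {j}. x$k ^ a k)"
proof -
  have "(\<Prod>k\<in>UNIV - {j}. (x + y *\<^sub>R axis j 1)$k ^ a k) = (\<Prod>k\<in>UNIV - {j}. x$k ^ a k)"
    by (rule prod.cong) (auto simp: axis_def)
  then show ?thesis
    unfolding vec_monomial_def by (subst prod.remove[of UNIV j]) (auto simp: axis_def)
qed

lemma vec_monomial_add_axis_eq:
  "b j = 0 \<Longrightarrow> vec_monomial (x + y *\<^sub>R axis j 1) b = vec_monomial x b"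
  unfolding vec_monomial_def by (intro prod.cong) (auto simp: axis_def)

lemma emeasure_near_zero_set:
  fixes T :: "'n::finite binomial"
  assumes T: "nondegenerate_binomial T" and R: "R \<ge> 1" and e: "e > 0"
  shows "emeasure lborel (near_zero_set R e T) \<le> ennreal (4 * e * R ^ (CARD('n) - 1))"
proof -
  obtain m m' a b where T_eq: "T = (m, m', a, b)" by (cases T) auto
  from T obtain j where j: "a j > 0" "b j = 0" and m: "m \<ge> 1"
    by (auto simp: nondegenerate_binomial_def T_eq)
  have "emeasure lborel (near_zero_set R e T) \<le> ennreal (4 * e * R ^ (DIM(real^'n) - 1))"
  proof (rule emeasure_le_by_lines[where i="axis j 1"])
    show "axis j 1 \<in> (Basis :: (real^'n) set)" by (auto simp: Basis_vec_def)
    show "0 \<le> x \<bullet> v \<and> x \<bullet> v \<le> R"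
      if x: "x \<in> near_zero_set R e T" and v: "v \<in> Basis" for x v
    proof -
      obtain k where "v = axis k 1" using v by (auto simp: Basis_vec_def)
      then have "x \<bullet> v = x$k" by (simp add: cart_eq_inner_axis)
      moreover have "1 \<le> x$k" "x$k \<le> R" using x by (auto simp: near_zero_set_def)
      ultimately show ?thesis by simp
    qed
    show "emeasure lborel {y. x + y *\<^sub>R axis j 1 \<in> near_zero_set R e T} \<le> ennreal (4 * e)" for x
    proof (cases "{y. x + y *\<^sub>R axis j 1 \<in> near_zero_set R e T} = {}")
      case False
      then obtain y0 where "x + y0 *\<^sub>R axis j 1 \<in> near_zero_set R e T" by auto
      then have xk: "x$k \<ge> 1" if "k \<noteq> j" for k
        using that by (auto simp: near_zero_set_def axis_def dest: spec[of _ k])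
      define c where "c = real m * (\<Prod>k\<in>UNIV - {j}. x$k ^ a k)"
      have "(\<Prod>k\<in>UNIV - {j}. x$k ^ a k) \<ge> 1"
        using xk by (intro prod_ge_1) (auto simp: one_le_power)
      moreover have "real m \<ge> 1" using m by simp
      ultimately have c: "c \<ge> 1" unfolding c_def using mult_mono[of 1 "real m" 1] by force
      have "binomial_value (x + y *\<^sub>R axis j 1) T = c * (x$j + y) ^ a j - real m' * vec_monomial x b"
        for y
        unfolding binomial_value_def T_eq prod.case vec_monomial_add_axis_eq[of b j, OF j(2)]
        by (simp add: c_def vec_monomial_add_axis mult_ac)
      then have "{y. x + y *\<^sub>R axis j 1 \<in> near_zero_set R e T}
          \<subseteq> {y. 1 \<le> x$j + y \<and> \<bar>c * (x$j + y) ^ a j - real m' * vec_monomial x b\<bar> < e}"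
        by (auto simp: near_zero_set_def dest: spec[of _ j])
      then have "emeasure lborel {y. x + y *\<^sub>R axis j 1 \<in> near_zero_set R e T}
           \<le> emeasure lborel {y. 1 \<le> x$j + y \<and> \<bar>c * (x$j + y) ^ a j - real m' * vec_monomial x b\<bar> < e}"
        by (rule emeasure_mono) measurable
      also have "\<dots> \<le> ennreal (4 * e)"
        using c j e by (intro emeasure_scaled_power_near_level) auto
      finally show ?thesis .
    qed (simp only: emeasure_empty zero_le)
  qed (use R e in auto)
  then show ?thesis by simp
qed

lemma zero_set_null:
  fixes T :: "'n::finite binomial"
  assumes T: "nondegenerate_binomial T" and R: "R \<ge> 1"
  shows "{x. (\<forall>i. 1 \<le> x$i \<and> x$i \<le> R) \<and> binomial_value x T = 0} \<in> null_sets lborel"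
    (is "?Z \<in> _")
proof -
  define C where "C = 4 * R ^ (CARD('n) - 1)"
  have C: "C > 0" using R by (simp add: C_def)
  have "?Z \<in> sets lborel"
    unfolding binomial_value_def vec_monomial_def by (cases T) (simp, measurable)
  moreover have "emeasure lborel ?Z \<le> 0 + ennreal e" if e: "e > 0" for e
  proof -
    have "?Z \<subseteq> near_zero_set R (e / C) T" using e C by (auto simp: near_zero_set_def)
    then have "emeasure lborel ?Z \<le> emeasure lborel (near_zero_set R (e / C) T)"
      by (rule emeasure_mono) simp
    also have "\<dots> \<le> ennreal (4 * (e / C) * R ^ (CARD('n) - 1))"
      using e C by (intro emeasure_near_zero_set[OF T R]) auto
    also have "4 * (e / C) * R ^ (CARD('n) - 1) = e"
      using R by (simp add: C_def)
    finally show ?thesis by simp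
  qed
  then have "emeasure lborel ?Z \<le> 0" by (rule ennreal_le_epsilon)
  then have "emeasure lborel ?Z = 0" by (simp only: le_zero_eq)
  ultimately show ?thesis by (simp add: null_sets_def)
qed

section \<open>Summable weights and the almost sure lower bound\<close>
definition binomial_height :: "'n::finite binomial \<Rightarrow> nat" where
  "binomial_height T = (case T of (m, m', a, b) \<Rightarrow> m + m' + sum a UNIV + sum b UNIV)"

text \<open>The exponent is chosen so that the weights are summable: there are at most
  (s + 1)^(2 CARD('n) + 2) binomials of height s.\<close>
definition binomial_weight :: "'n::finite binomial \<Rightarrow> real" where
  "binomial_weight T = inverse (real (binomial_height T + 1) ^ (2 * CARD('n) + 4))"

lemma binomial_weight_pos: "binomial_weight T > 0"
  unfolding binomial_weight_def by simp

lemma binomials_of_height_subset: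
  "{T :: 'n::finite binomial. binomial_height T = s}
     \<subseteq> {..s} \<times> {..s} \<times> (Pi\<^sub>E UNIV (\<lambda>_. {..s})) \<times> (Pi\<^sub>E UNIV (\<lambda>_. {..s}))"
proof
  fix T :: "'n binomial" assume "T \<in> {T. binomial_height T = s}"
  then obtain m m' a b where T: "T = (m, m', a, b)" and h: "m + m' + sum a UNIV + sum b UNIV = s"
    by (cases T) (auto simp: binomial_height_def)
  have "a i \<le> s" "b i \<le> s" for i using member_le_sum[of i UNIV a] member_le_sum[of i UNIV b] h by auto
  then show "T \<in> {..s} \<times> {..s} \<times> (Pi\<^sub>E UNIV (\<lambda>_. {..s})) \<times> (Pi\<^sub>E UNIV (\<lambda>_. {..s}))"
    using h by (auto simp: T PiE_UNIV_domain)
qed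

lemma finite_binomials_of_height: "finite {T :: 'n::finite binomial. binomial_height T = s}"
  by (rule finite_subset[OF binomials_of_height_subset]) (intro finite_cartesian_product finite_PiE; simp)

lemma card_binomials_of_height:
  "card {T :: 'n::finite binomial. binomial_height T = s} \<le> (s + 1) ^ (2 * CARD('n) + 2)"
proof -
  have "card {T :: 'n binomial. binomial_height T = s}
      \<le> card ({..s} \<times> {..s} \<times> (Pi\<^sub>E (UNIV :: 'n set) (\<lambda>_. {..s})) \<times> (Pi\<^sub>E (UNIV :: 'n set) (\<lambda>_. {..s})))"
    by (rule card_mono[OF _ binomials_of_height_subset]) (intro finite_cartesian_product finite_PiE; simp)
  also have "\<dots> = (s + 1) ^ (2 * CARD('n) + 2)"
    by (simp add: card_cartesian_product card_PiE mult_2 power_add power2_eq_square)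
  finally show ?thesis .
qed

lemma sum_binomial_weight_le:
  fixes F :: "'n::finite binomial set"
  assumes "finite F"
  shows "(\<Sum>T\<in>F. binomial_weight T) \<le> (\<Sum>n. inverse (real n ^ 2))"
proof -
  define E where "E = 2 * CARD('n) + 2"
  define K where "K = Max (insert 0 (binomial_height ` F))"
  define L where "L s = {T :: 'n binomial. binomial_height T = s}" for s
  have "F \<subseteq> (\<Union>s\<in>{..K}. L s)"
    using assms by (auto simp: K_def L_def)
  then have "(\<Sum>T\<in>F. binomial_weight T) \<le> (\<Sum>T\<in>(\<Union>s\<in>{..K}. L s). binomial_weight T)"
    by (rule sum_mono2[rotated])
      (auto simp: L_def finite_binomials_of_height less_imp_le[OF binomial_weight_pos])
  also have "\<dots> = (\<Sum>s\<in>{..K}. \<Sum>T\<in>L s. binomial_weight T)"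
    by (rule sum.UNION_disjoint) (auto simp: L_def finite_binomials_of_height)
  also have "\<dots> \<le> (\<Sum>s\<in>{..K}. inverse (real (s + 1) ^ 2))"
  proof (rule sum_mono)
    fix s
    have "(\<Sum>T\<in>L s. binomial_weight T) = real (card (L s)) / real (s + 1) ^ (E + 2)"
      by (simp add: L_def binomial_weight_def E_def divide_inverse eval_nat_numeral)
    also have "\<dots> \<le> real (s + 1) ^ E / real (s + 1) ^ (E + 2)"
      using card_binomials_of_height[where 'n='n, of s] unfolding L_def E_def
      by (intro divide_right_mono) (simp only: of_nat_le_iff flip: of_nat_power, simp)
    also have "\<dots> = inverse (real (s + 1) ^ 2)"
      by (simp add: power_add field_simps power2_eq_square del: of_nat_Suc)
    finally show "(\<Sum>T\<in>L s. binomial_weight T) \<le> inverse (real (s + 1) ^ 2)" .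
  qed
  also have "\<dots> = (\<Sum>n\<in>Suc ` {..K}. inverse (real n ^ 2))"
    by (subst sum.reindex) auto
  also have "\<dots> \<le> (\<Sum>n. inverse (real n ^ 2))"
    by (rule sum_le_suminf) (auto intro: inverse_power_summable)
  finally show ?thesis .
qed

lemma AE_finite_near_zero_sets:
  assumes "R \<ge> 1"
  shows "AE x in (lborel :: (real^'n::finite) measure). finite
     {T :: 'n binomial. nondegenerate_binomial T \<and> x \<in> near_zero_set R (binomial_weight T) T}"
proof -
  define C where "C = 4 * R ^ (CARD('n) - 1)"
  have "C > 0" using assms by (simp add: C_def)
  define A where "A T = (if nondegenerate_binomial T then near_zero_set R (binomial_weight T) T else {})"
    for T :: "'n binomial"
  have "AE x in lborel. finite {T. x \<in> A T}"
  proof (rule AE_finite_occurrences)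
    show "A T \<in> sets lborel" for T by (simp add: A_def)
    show "emeasure lborel (A T) \<le> ennreal (C * binomial_weight T)" for T
    proof (cases "nondegenerate_binomial T")
      case True
      then show ?thesis using emeasure_near_zero_set[OF True assms binomial_weight_pos]
        by (simp add: A_def C_def mult_ac)
    qed (simp add: A_def)
    show "C * binomial_weight T \<ge> 0" for T using \<open>C > 0\<close> binomial_weight_pos[of T] by simp
    show "(\<Sum>T\<in>F. C * binomial_weight T) \<le> C * (\<Sum>n. inverse (real n ^ 2))" if "finite F" for F
      using sum_binomial_weight_le[OF that] \<open>C > 0\<close> by (simp flip: sum_distrib_left)
  qed
  then show ?thesis by (rule eventually_mono) (erule rev_finite_subset, auto simp: A_def)
qed

lemma AE_binomial_lower_bound:
  "AE x in (lborel :: (real^'n::finite) measure). (\<forall>i. x$i > 1) \<longrightarrow>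
     (\<exists>c>0. c \<le> 1 \<and> (\<forall>T :: 'n binomial. nondegenerate_binomial T \<longrightarrow>
        c * binomial_weight T \<le> \<bar>binomial_value x T\<bar>))"
proof -
  have "AE x in lborel. nondegenerate_binomial T \<longrightarrow>
      x \<notin> {x. (\<forall>i. 1 \<le> x$i \<and> x$i \<le> real (Suc k)) \<and> binomial_value x T = 0}"
    for k and T :: "'n binomial"
  proof (cases "nondegenerate_binomial T")
    case True
    have "real (Suc k) \<ge> 1" by simp
    from AE_not_in[OF zero_set_null[OF True this]] show ?thesis by (rule eventually_mono) simp
  qed simp
  then have "AE x in lborel. \<forall>k::nat. \<forall>T :: 'n binomial. nondegenerate_binomial T \<longrightarrow>
      x \<notin> {x. (\<forall>i. 1 \<le> x$i \<and> x$i \<le> real (Suc k)) \<and> binomial_value x T = 0}"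
    by (simp add: AE_all_countable)
  moreover have "AE x in lborel. \<forall>k::nat. finite {T :: 'n binomial. nondegenerate_binomial T \<and>
      x \<in> near_zero_set (real (Suc k)) (binomial_weight T) T}"
    by (intro AE_all_countable[THEN iffD2] allI AE_finite_near_zero_sets) simp
  ultimately show ?thesis
  proof eventually_elim
    case (elim x)
    show ?case
    proof
      assume x: "\<forall>i. x$i > 1"
      obtain k :: nat where k: "Max (range (\<lambda>i. x$i)) \<le> real k" using real_arch_simple by blast
      have box: "1 \<le> x$i \<and> x$i \<le> real (Suc k)" for i
      proof -
      have "x$i \<le> real k" using Max_ge[of "range (\<lambda>i. x$i)" "x$i"] k by simp
      then show ?thesis using x[rule_format, of i] by simp
    qed
      show "\<exists>c>0. c \<le> 1 \<and> (\<forall>T. nondegenerate_binomial T \<longrightarrow>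
              c * binomial_weight T \<le> \<bar>binomial_value x T\<bar>)"
      proof (rule lower_bound_up_to_finite_exceptions)
        show "finite {T. nondegenerate_binomial T \<and> \<bar>binomial_value x T\<bar> < binomial_weight T}"
          using elim(2)[rule_format, of k] box by (simp add: near_zero_set_def)
        show "\<bar>binomial_value x T\<bar> > 0" if "nondegenerate_binomial T" for T
          using elim(1)[THEN spec[of _ k], THEN spec[of _ T]] that box by auto
      qed (rule binomial_weight_pos)
    qed
  qed
qed

section \<open>Beurling integers of the extended system\<close>
lemma card_less_strict_mono:
  fixes B :: "'a::linorder set"
  assumes fin: "\<And>T. finite {b\<in>B. b \<le> T}" and "b1 \<in> B" "b1 < b2"
  shows "card {a\<in>B. a < b1} < card {a\<in>B. a < b2}"
proof -
  have "finite {a\<in>B. a < b2}" by (rule finite_subset[OF _ fin[of b2]]) auto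
  moreover have "insert b1 {a\<in>B. a < b1} \<subseteq> {a\<in>B. a < b2}" using assms by auto
  ultimately have "card (insert b1 {a\<in>B. a < b1}) \<le> card {a\<in>B. a < b2}" by (rule card_mono)
  moreover have "card (insert b1 {a\<in>B. a < b1}) = Suc (card {a\<in>B. a < b1})"
    by (rule card_insert_disjoint) (auto intro: finite_subset[OF _ fin[of b1]])
  ultimately show ?thesis by simp
qed

lemma ex_card_less_eq:
  fixes B :: "'a::linorder set"
  assumes fin: "\<And>T. finite {b\<in>B. b \<le> T}" and unb: "\<And>T. \<exists>b\<in>B. b > T"
  shows "\<exists>b\<in>B. card {a\<in>B. a < b} = k"
proof (induction k)
  case 0
  obtain b1 where b1: "b1 \<in> B" using unb by blast
  define S where "S = {b\<in>B. b \<le> b1}"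
  have S: "finite S" "S \<noteq> {}" using fin b1 by (auto simp: S_def)
  have "Min S \<in> B" "{a\<in>B. a < Min S} = {}"
    using Min_in[OF S] Min_le[OF S(1)] by (fastforce simp: S_def)+
  then show ?case by (metis card.empty)
next
  case (Suc k)
  then obtain b where b: "b \<in> B" "card {a\<in>B. a < b} = k" by auto
  obtain c where c: "c \<in> B" "c > b" using unb by blast
  define S where "S = {a\<in>B. b < a \<and> a \<le> c}"
  have S: "finite S" "S \<noteq> {}" using c by (auto simp: S_def intro: finite_subset[OF _ fin[of c]])
  define b' where "b' = Min S"
  have b': "b' \<in> B" "b < b'" "b' \<le> c" using Min_in[OF S] by (auto simp: b'_def S_def)
  have "a \<le> b" if "a \<in> B" "a < b'" for a
  proof (rule ccontr)
    assume "\<not> a \<le> b"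
    then have "a \<in> S" using that b' by (auto simp: S_def)
    then show False using Min_le[OF S(1), of a] that(2) by (simp add: b'_def)
  qed
  then have "{a\<in>B. a < b'} = insert b {a\<in>B. a < b}" using b b' by force
  moreover have "finite {a\<in>B. a < b}" by (rule finite_subset[OF _ fin[of b]]) auto
  ultimately have "card {a\<in>B. a < b'} = Suc k" using b by simp
  then show ?case using b' by blast
qed

lemma ex1_card_less_eq:
  fixes B :: "'a::linorder set"
  assumes fin: "\<And>T. finite {b\<in>B. b \<le> T}" and unb: "\<And>T. \<exists>b\<in>B. b > T"
  shows "\<exists>!b. b \<in> B \<and> card {a\<in>B. a < b} = k"
proof -
  obtain b where b: "b \<in> B" "card {a\<in>B. a < b} = k" using ex_card_less_eq[OF fin unb] by blast
  have "b' = b" if "b' \<in> B" "card {a\<in>B. a < b'} = k" for b'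
    using card_less_strict_mono[OF fin that(1), of b] card_less_strict_mono[OF fin b(1), of b'] b that
    by (cases b b' rule: linorder_cases) auto
  then show ?thesis using b by blast
qed

lemma
  assumes fin: "\<And>T. finite {b\<in>beurling_integers I g. b \<le> T}"
    and unb: "\<And>T. \<exists>b\<in>beurling_integers I g. b > T" and n: "n \<ge> 1"
  shows beurling_nu_mem: "beurling_nu I g n \<in> beurling_integers I g"
    and beurling_nu_less_Suc: "beurling_nu I g n < beurling_nu I g (Suc n)"
proof -
  let ?B = "beurling_integers I g"
  have nu: "beurling_nu I g k \<in> ?B \<and> card {a\<in>?B. a < beurling_nu I g k} = k - 1" for k
    unfolding beurling_nu_def by (rule theI') (rule ex1_card_less_eq[OF fin unb])
  then show "beurling_nu I g n \<in> ?B" by blast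
  show "beurling_nu I g n < beurling_nu I g (Suc n)"
  proof (rule ccontr)
    assume "\<not> ?thesis"
    then have "card {a\<in>?B. a < beurling_nu I g (Suc n)} \<le> card {a\<in>?B. a < beurling_nu I g n}"
      by (intro card_mono) (auto intro: finite_subset[OF _ fin[of "beurling_nu I g n"]])
    then show False using nu[of n] nu[of "Suc n"] n by simp
  qed
qed

lemma prod_primes_plus:
  fixes F :: "(nat + 'n::finite) set"
  assumes F: "finite F"
  shows "(\<Prod>i\<in>F. primes_plus x i ^ e i) =
     real (\<Prod>p\<in>Inl -` F. p ^ e (Inl p)) * vec_monomial x (\<lambda>j. if Inr j \<in> F then e (Inr j) else 0)"
proof -
  have F_eq: "F = Inl ` (Inl -` F) \<union> Inr ` (Inr -` F)"
    by (auto intro: sum.exhaust_sel)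
  have "(\<Prod>i\<in>F. primes_plus x i ^ e i) =
      (\<Prod>i\<in>Inl ` (Inl -` F). primes_plus x i ^ e i) * (\<Prod>i\<in>Inr ` (Inr -` F). primes_plus x i ^ e i)"
    by (subst F_eq, rule prod.union_disjoint) (use F in auto)
  also have "(\<Prod>i\<in>Inl ` (Inl -` F). primes_plus x i ^ e i) = (\<Prod>p\<in>Inl -` F. real p ^ e (Inl p))"
    by (subst prod.reindex) (auto simp: primes_plus_def)
  also have "(\<Prod>i\<in>Inr ` (Inr -` F). primes_plus x i ^ e i) = (\<Prod>j\<in>Inr -` F. x$j ^ e (Inr j))"
    by (subst prod.reindex) (auto simp: primes_plus_def)
  also have "\<dots> = vec_monomial x (\<lambda>j. if Inr j \<in> F then e (Inr j) else 0)"
    unfolding vec_monomial_def by (rule prod.mono_neutral_cong_left) auto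
  finally show ?thesis by simp
qed

lemma prod_prime_powers_ge_1:
  "(\<And>p. p \<in> P \<Longrightarrow> prime p) \<Longrightarrow> (\<Prod>p\<in>P. p ^ e p) \<ge> (1::nat)"
  by (intro prod_ge_1) (simp add: Suc_le_eq prime_gt_0_nat)

lemma beurling_integers_primes_plus_form:
  assumes "b \<in> beurling_integers primes_plus_index (primes_plus (x :: real^'n::finite))"
  shows "\<exists>m a. m \<ge> 1 \<and> b = real m * vec_monomial x a"
proof -
  from assms obtain F k where F: "finite F" "F \<subseteq> primes_plus_index"
    and b: "b = (\<Prod>i\<in>F. primes_plus x i ^ k i)"
    unfolding beurling_integers_def by blast
  have "(\<Prod>p\<in>Inl -` F. p ^ k (Inl p)) \<ge> 1"
    using F by (intro prod_prime_powers_ge_1) (auto simp: primes_plus_index_def)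
  then show ?thesis unfolding b prod_primes_plus[OF F(1)] by blast
qed

lemma power_of_two_in_beurling_integers:
  "2 ^ k \<in> beurling_integers primes_plus_index (primes_plus (x :: real^'n::finite))"
proof -
  have "(\<Prod>i\<in>{Inl 2 :: nat + 'n}. primes_plus x i ^ k) \<in> beurling_integers primes_plus_index (primes_plus x)"
    unfolding beurling_integers_def
    by (intro CollectI exI[of _ "{Inl 2 :: nat + 'n}"] exI[of _ "\<lambda>_. k"]) (auto simp: primes_plus_index_def)
  then show ?thesis by (simp add: primes_plus_def)
qed

lemma beurling_integers_primes_plus_unbounded:
  "\<exists>b\<in>beurling_integers primes_plus_index (primes_plus (x :: real^'n::finite)). b > T"
  using real_arch_pow[of 2 T] power_of_two_in_beurling_integers by fastforce

lemma finite_beurling_integers_primes_plus_le: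
  assumes x: "\<And>i. (x :: real^'n::finite)$i > 1"
  shows "finite {b\<in>beurling_integers primes_plus_index (primes_plus x). b \<le> T}"
proof -
  define d where "d = Min (range (\<lambda>i. x$i))"
  have d: "d > 1" unfolding d_def using x by (subst Min_gr_iff) auto
  have xd: "x$i \<ge> d" for i unfolding d_def by (rule Min_le) auto
  obtain K where K: "T < d ^ K" using real_arch_pow[OF d] by auto
  have "{b\<in>beurling_integers primes_plus_index (primes_plus x). b \<le> T}
      \<subseteq> (\<lambda>(m, a). real m * vec_monomial x a) ` ({..nat \<lfloor>T\<rfloor>} \<times> Pi\<^sub>E UNIV (\<lambda>_. {..K}))"
  proof
    fix b assume "b \<in> {b\<in>beurling_integers primes_plus_index (primes_plus x). b \<le> T}"
    then obtain m a where m: "m \<ge> 1" and b: "b = real m * vec_monomial x a" and "b \<le> T"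
      using beurling_integers_primes_plus_form by blast
    moreover have X: "vec_monomial x a \<ge> 1" using x by (intro vec_monomial_ge_1) (simp add: less_imp_le)
    ultimately have "real m \<le> T" "vec_monomial x a \<le> T"
      by (simp_all add: mult_le_cancel_left1 mult_le_cancel_right1 order_trans[of _ b])
    have "a i \<le> K" for i
    proof -
      have "d ^ a i \<le> d ^ sum a UNIV" using d by (intro power_increasing member_le_sum) auto
      also have "\<dots> \<le> vec_monomial x a" using xd d by (intro vec_monomial_ge_power_sum) auto
      finally have "d ^ a i < d ^ K" using \<open>vec_monomial x a \<le> T\<close> K by linarith
      then show ?thesis using power_less_imp_less_exp[OF d] by (meson less_imp_le)
    qed
    then show "b \<in> (\<lambda>(m, a). real m * vec_monomial x a) ` ({..nat \<lfloor>T\<rfloor>} \<times> Pi\<^sub>E UNIV (\<lambda>_. {..K}))"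
      using \<open>real m \<le> T\<close> b by (force simp: PiE_UNIV_domain le_nat_floor)
  qed
  then show ?thesis by (rule finite_subset) (intro finite_imageI finite_cartesian_product finite_PiE; simp)
qed

section \<open>Linear independence\<close>
lemma rat_common_denominator:
  fixes c :: "'i \<Rightarrow> rat"
  assumes "finite F"
  shows "\<exists>D::int. D > 0 \<and> (\<exists>d. \<forall>i\<in>F. of_rat (c i) * real_of_int D = real_of_int (d i))"
  using assms
proof (induction F rule: finite_induct)
  case empty
  show ?case by (intro exI[of _ 1]) auto
next
  case (insert i F)
  from insert.IH obtain D d
    where D: "D > 0" and d: "\<forall>j\<in>F. of_rat (c j) * real_of_int D = real_of_int (d j)"
    by blast
  obtain p q where pq: "quotient_of (c i) = (p, q)" by (cases "quotient_of (c i)") auto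
  have q: "q > 0" using quotient_of_denom_pos[OF pq] .
  have ci: "of_rat (c i) = real_of_int p / real_of_int q"
    unfolding quotient_of_div[OF pq] by (simp add: of_rat_divide)
  define d' where "d' j = (if j = i then p * D else d j * q)" for j
  have "\<forall>j\<in>insert i F. of_rat (c j) * real_of_int (D * q) = real_of_int (d' j)"
  proof
    fix j assume "j \<in> insert i F"
    then show "of_rat (c j) * real_of_int (D * q) = real_of_int (d' j)"
      using q d by (cases "j = i") (auto simp: d'_def ci simp flip: mult.assoc)
  qed
  moreover have "D * q > 0" using D q by simp
  ultimately show ?case by blast
qed

lemma ln_prod_power:
  assumes "finite F" "\<And>i. i \<in> F \<Longrightarrow> (g i :: real) > 0"
  shows "ln (\<Prod>i\<in>F. g i ^ e i) = (\<Sum>i\<in>F. real (e i) * ln (g i))"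
proof -
  have "ln (\<Prod>i\<in>F. g i ^ e i) = (\<Sum>i\<in>F. ln (g i ^ e i))"
    by (rule ln_prod) (use assms in \<open>auto dest: assms(2) simp: less_irrefl\<close>)
  then show ?thesis using assms by (simp add: ln_realpow)
qed

lemma primes_plus_pos: "i \<in> primes_plus_index \<Longrightarrow> (\<And>j. x$j > 1) \<Longrightarrow> primes_plus x i > 0"
  by (cases i) (auto simp: primes_plus_index_def primes_plus_def prime_gt_0_nat dest: less_trans[OF zero_less_one])

text \<open>Unique factorisation in the extended system: the extra generators are separated from each
  other and from the integers by the nonvanishing of the binomials, the primes by ordinary
  factorisation.\<close>
lemma primes_plus_prod_eq_imp_exponents_zero:
  fixes x :: "real^'n::finite"
  assumes nz: "\<And>T. nondegenerate_binomial T \<Longrightarrow> binomial_value x T \<noteq> 0"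
    and F: "finite F" "F \<subseteq> primes_plus_index"
    and disjoint: "\<And>i. e1 i = 0 \<or> e2 i = 0"
    and eq: "(\<Prod>i\<in>F. primes_plus x i ^ e1 i) = (\<Prod>i\<in>F. primes_plus x i ^ e2 i)"
  shows "\<forall>i\<in>F. e1 i = 0 \<and> e2 i = 0"
proof -
  define m1 where "m1 = (\<Prod>p\<in>Inl -` F. p ^ e1 (Inl p))"
  define m2 where "m2 = (\<Prod>p\<in>Inl -` F. p ^ e2 (Inl p))"
  define a1 where "a1 j = (if Inr j \<in> F then e1 (Inr j) else 0)" for j
  define a2 where "a2 j = (if Inr j \<in> F then e2 (Inr j) else 0)" for j
  have primes: "prime p" if "p \<in> Inl -` F" for p using that F by (auto simp: primes_plus_index_def)
  have eq': "real m1 * vec_monomial x a1 = real m2 * vec_monomial x a2"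
    using eq unfolding m1_def m2_def a1_def a2_def prod_primes_plus[OF F(1)] .
  have m: "m1 \<ge> 1" "m2 \<ge> 1"
    unfolding m1_def m2_def by (rule prod_prime_powers_ge_1, erule primes)+
  have a: "a1 j = 0 \<and> a2 j = 0" for j
  proof (rule ccontr)
    assume "\<not> (a1 j = 0 \<and> a2 j = 0)"
    moreover have "a1 j = 0 \<or> a2 j = 0" using disjoint[of "Inr j"] by (simp add: a1_def a2_def)
    ultimately consider "a1 j > 0" "a2 j = 0" | "a2 j > 0" "a1 j = 0" by auto
    then have "nondegenerate_binomial (m1, m2, a1, a2) \<or> nondegenerate_binomial (m2, m1, a2, a1)"
      using m by cases (auto simp: nondegenerate_binomial_def)
    then show False using nz[of "(m1, m2, a1, a2)"] nz[of "(m2, m1, a2, a1)"] eq'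
      by (auto simp: binomial_value_def)
  qed
  then have "vec_monomial x a1 = 1" "vec_monomial x a2 = 1" by (auto simp: vec_monomial_def)
  then have "m1 = m2" using eq' by simp
  show ?thesis
  proof
    fix i assume i: "i \<in> F"
    show "e1 i = 0 \<and> e2 i = 0"
    proof (cases i)
      case (Inr j)
      then show ?thesis using a[of j] i by (simp add: a1_def a2_def)
    next
      case (Inl p)
      have fin: "finite (Inl -` F)" using F(1) by (intro finite_vimageI) auto
      have "p \<in> Inl -` F" using i Inl by simp
      then have "multiplicity p m1 = e1 i" "multiplicity p m2 = e2 i"
        unfolding m1_def m2_def Inl
        by (subst multiplicity_prod_prime_powers; use fin primes in auto)+
      then show ?thesis using \<open>m1 = m2\<close> disjoint[of i] by auto
    qed
  qed
qed

lemma ln_primes_plus_rat_independent: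
  fixes x :: "real^'n::finite"
  assumes x: "\<And>i. x$i > 1" and nz: "\<And>T. nondegenerate_binomial T \<Longrightarrow> binomial_value x T \<noteq> 0"
    and F: "finite F" "F \<subseteq> primes_plus_index"
    and rel: "(\<Sum>i\<in>F. of_rat (c i) * ln (primes_plus x i)) = 0"
  shows "\<forall>i\<in>F. c i = 0"
proof -
  let ?g = "primes_plus x"
  have g: "?g i > 0" if "i \<in> F" for i using that F x by (intro primes_plus_pos) auto
  obtain D d where D: "(D::int) > 0" and d: "\<forall>i\<in>F. of_rat (c i) * real_of_int D = real_of_int (d i)"
    using rat_common_denominator[OF F(1), of c] by blast
  have "(\<Sum>i\<in>F. real_of_int (d i) * ln (?g i)) = (\<Sum>i\<in>F. of_rat (c i) * ln (?g i) * real_of_int D)"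
    by (rule sum.cong) (simp_all add: d[rule_format, symmetric] mult_ac)
  also have "\<dots> = (\<Sum>i\<in>F. of_rat (c i) * ln (?g i)) * real_of_int D"
    by (rule sum_distrib_right[symmetric])
  finally have int_rel: "(\<Sum>i\<in>F. real_of_int (d i) * ln (?g i)) = 0" using rel by simp
  define e1 where "e1 i = nat (d i)" for i
  define e2 where "e2 i = nat (- d i)" for i
  have "real_of_int (d i) = real (e1 i) - real (e2 i)" for i by (simp add: e1_def e2_def)
  then have "(\<Sum>i\<in>F. real (e1 i) * ln (?g i)) = (\<Sum>i\<in>F. real (e2 i) * ln (?g i))"
    using int_rel by (simp add: left_diff_distrib sum_subtractf)
  then have "ln (\<Prod>i\<in>F. ?g i ^ e1 i) = ln (\<Prod>i\<in>F. ?g i ^ e2 i)"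
    using F(1) g by (simp add: ln_prod_power)
  then have "(\<Prod>i\<in>F. ?g i ^ e1 i) = (\<Prod>i\<in>F. ?g i ^ e2 i)"
    using g by (subst (asm) ln_inj_iff) (auto intro!: prod_pos)
  moreover have "e1 i = 0 \<or> e2 i = 0" for i by (simp add: e1_def e2_def) linarith
  ultimately have "\<forall>i\<in>F. e1 i = 0 \<and> e2 i = 0"
    using primes_plus_prod_eq_imp_exponents_zero[OF nz F] by blast
  show ?thesis
  proof
    fix i assume "i \<in> F"
    then have "of_rat (c i) * real_of_int D = 0"
      using d \<open>\<forall>i\<in>F. e1 i = 0 \<and> e2 i = 0\<close> by (auto simp: e1_def e2_def)
    then show "c i = 0" using D by simp
  qed
qed

lemma beurling_prime_system_primes_plus:
  fixes x :: "real^'n::finite"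
  assumes x: "\<And>i. x$i > 1" and nz: "\<And>T. nondegenerate_binomial T \<Longrightarrow> binomial_value x T \<noteq> 0"
  shows "beurling_prime_system primes_plus_index (primes_plus x)"
  unfolding beurling_prime_system_def
proof (intro conjI allI impI ballI)
  show "primes_plus x i > 1" if "i \<in> primes_plus_index" for i
    using that x by (cases i) (auto simp: primes_plus_def primes_plus_index_def dest: prime_gt_1_nat)
  show "finite {i \<in> primes_plus_index. primes_plus x i \<le> T}" for T
  proof (rule finite_subset)
    show "{i \<in> primes_plus_index. primes_plus x i \<le> T} \<subseteq> Inl ` {..nat \<lceil>T\<rceil>} \<union> range Inr"
    proof
      fix i assume i: "i \<in> {i \<in> primes_plus_index. primes_plus x i \<le> T}"
      show "i \<in> Inl ` {..nat \<lceil>T\<rceil>} \<union> range Inr"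
      proof (cases i)
        case (Inl p)
        then have "p \<le> nat \<lceil>T\<rceil>" using i by (simp add: primes_plus_def) linarith
        then show ?thesis using Inl by auto
      qed auto
    qed
  qed auto
qed (use ln_primes_plus_rat_independent[OF x nz] in blast)

section \<open>Bohr's condition\<close>
lemma binomial_weight_antimono:
  fixes T T' :: "'n::finite binomial"
  shows "binomial_height T \<le> binomial_height T' \<Longrightarrow> binomial_weight T' \<le> binomial_weight T"
  unfolding binomial_weight_def by (intro le_imp_inverse_le power_mono) auto

lemma binomial_weight_le_1: "binomial_weight T \<le> 1"
  unfolding binomial_weight_def by (simp add: inverse_le_1_iff one_le_power)

text \<open>Two consecutive Beurling integers differ by at least the weight of the binomial formed by
  their representations: after cancelling the common monomial factor, either the monomial parts
  agree and the difference is a positive integer multiple of a monomial, or the reduced binomial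
  is nondegenerate and of no larger height.\<close>
lemma binomial_weight_le_gap:
  fixes x :: "real^'n::finite"
  assumes x: "\<And>i. x$i \<ge> 1" and c: "c > 0" "c \<le> 1"
    and hc: "\<And>T. nondegenerate_binomial T \<Longrightarrow> c * binomial_weight T \<le> \<bar>binomial_value x T\<bar>"
    and m: "m1 \<ge> 1" "m2 \<ge> 1"
    and lt: "real m1 * vec_monomial x a1 < real m2 * vec_monomial x a2"
  shows "c * binomial_weight (m1, m2, a1, a2) \<le> real m2 * vec_monomial x a2 - real m1 * vec_monomial x a1"
proof -
  define b1 where "b1 j = a1 j - min (a1 j) (a2 j)" for j
  define b2 where "b2 j = a2 j - min (a1 j) (a2 j)" for j
  define X where "X = vec_monomial x (\<lambda>j. min (a1 j) (a2 j))"
  define D where "D = real m2 * vec_monomial x b2 - real m1 * vec_monomial x b1"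
  have "(\<lambda>j. b1 j + min (a1 j) (a2 j)) = a1" "(\<lambda>j. b2 j + min (a1 j) (a2 j)) = a2"
    by (auto simp: b1_def b2_def)
  then have "vec_monomial x a1 = vec_monomial x b1 * X" "vec_monomial x a2 = vec_monomial x b2 * X"
    unfolding X_def by (metis vec_monomial_add)+
  then have gap: "real m2 * vec_monomial x a2 - real m1 * vec_monomial x a1 = X * D"
    by (simp add: D_def algebra_simps)
  have X: "X \<ge> 1" unfolding X_def using x by (rule vec_monomial_ge_1)
  moreover have "X * D > 0" using lt gap by linarith
  ultimately have "D > 0" by (simp add: zero_less_mult_iff)
  then have "D \<le> X * D" using X by (simp add: mult_le_cancel_right1)
  have "binomial_height (m1, m2, b1, b2) \<le> binomial_height (m1, m2, a1, a2)"
    unfolding binomial_height_def using sum_mono[of UNIV b1 a1] sum_mono[of UNIV b2 a2]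
    by (simp add: b1_def b2_def)
  then have weight: "binomial_weight (m1, m2, a1, a2) \<le> binomial_weight (m1, m2, b1, b2)"
    by (rule binomial_weight_antimono)
  have "c * binomial_weight (m1, m2, b1, b2) \<le> D"
  proof (cases "b1 = b2")
    case True
    then have D_eq: "D = (real m2 - real m1) * vec_monomial x b2" by (simp add: D_def algebra_simps)
    moreover have "vec_monomial x b2 \<ge> 1" using x by (rule vec_monomial_ge_1)
    ultimately have "m1 < m2" using \<open>D > 0\<close> by (simp add: zero_less_mult_iff)
    then have "1 * 1 \<le> (real m2 - real m1) * vec_monomial x b2"
      using \<open>vec_monomial x b2 \<ge> 1\<close> by (intro mult_mono) auto
    then have "1 \<le> D" using D_eq by simp
    moreover have "c * binomial_weight (m1, m2, b1, b2) \<le> 1"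
      using c binomial_weight_le_1[of "(m1, m2, b1, b2)"] binomial_weight_pos[of "(m1, m2, b1, b2)"]
      by (intro mult_le_one) auto
    ultimately show ?thesis by linarith
  next
    case False
    then obtain j where "b1 j \<noteq> b2 j" by auto
    moreover have "b1 j = 0 \<or> b2 j = 0" by (simp add: b1_def b2_def) linarith
    ultimately have "nondegenerate_binomial (m1, m2, b1, b2) \<or> nondegenerate_binomial (m2, m1, b2, b1)"
      using m by (auto simp: nondegenerate_binomial_def)
    moreover have "binomial_weight (m2, m1, b2, b1) = binomial_weight (m1, m2, b1, b2)"
      by (simp add: binomial_weight_def binomial_height_def ac_simps)
    moreover have "\<bar>binomial_value x (m1, m2, b1, b2)\<bar> = D" "\<bar>binomial_value x (m2, m1, b2, b1)\<bar> = D"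
      using \<open>D > 0\<close> by (simp_all add: binomial_value_def D_def)
    ultimately show ?thesis using hc by metis
  qed
  moreover have "c * binomial_weight (m1, m2, a1, a2) \<le> c * binomial_weight (m1, m2, b1, b2)"
    using weight c by (simp add: mult_left_mono)
  ultimately show ?thesis using \<open>D \<le> X * D\<close> gap by linarith
qed

lemma sum_exponents_le_power:
  fixes x :: "real^'n::finite"
  assumes "\<And>i. x$i \<ge> d" "d \<ge> 1" "2 \<le> d ^ L" "vec_monomial x b \<le> v"
  shows "real (sum b UNIV + 1) \<le> v ^ L"
proof -
  let ?s = "sum b UNIV"
  have "?s + 1 \<le> 2 ^ ?s" using less_exp[of ?s] by linarith
  then have "real (?s + 1) \<le> 2 ^ ?s" by (metis of_nat_le_iff of_nat_numeral of_nat_power)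
  also have "\<dots> \<le> (d ^ L) ^ ?s" using assms(3) by (rule power_mono) simp
  also have "\<dots> = (d ^ ?s) ^ L" by (simp flip: power_mult add: mult.commute)
  also have "\<dots> \<le> vec_monomial x b ^ L"
    using assms(2) by (intro power_mono vec_monomial_ge_power_sum assms(1)) auto
  also have "\<dots> \<le> v ^ L"
  proof (rule power_mono)
    have "x$i \<ge> 1" for i using assms(2) assms(1)[of i] by (rule order_trans)
    then show "0 \<le> vec_monomial x b" using vec_monomial_ge_1[of x b] by simp
  qed (rule assms(4))
  finally show ?thesis .
qed

lemma binomial_weight_ge_power:
  fixes x :: "real^'n::finite"
  assumes x: "\<And>i. x$i \<ge> d" and d: "d \<ge> 1" "2 \<le> d ^ L" and L: "L \<ge> 1"
    and m: "m1 \<ge> 1" "m2 \<ge> 1"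
    and v: "real m1 * vec_monomial x a1 \<le> v" "real m2 * vec_monomial x a2 \<le> v"
  shows "inverse ((4 * v ^ L) ^ (2 * CARD('n) + 4)) \<le> binomial_weight (m1, m2, a1, a2)"
proof -
  have x1: "x$i \<ge> 1" for i using d(1) x[of i] by (rule order_trans)
  have "real m \<le> real m * vec_monomial x a" "vec_monomial x a \<le> real m * vec_monomial x a"
    if "m \<ge> 1" for m a
    using that vec_monomial_ge_1[OF x1, of a] by (simp_all add: mult_le_cancel_left1 mult_le_cancel_right1)
  then have "vec_monomial x a1 \<le> v" "vec_monomial x a2 \<le> v" "real m1 \<le> v" "real m2 \<le> v"
    using v m by (meson order_trans)+
  moreover have "v \<le> v ^ L" using \<open>real m1 \<le> v\<close> m L by (simp add: power_increasing[of 1 L v, simplified])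
  moreover have "real (sum a1 UNIV + 1) \<le> v ^ L" "real (sum a2 UNIV + 1) \<le> v ^ L"
    using sum_exponents_le_power[OF x d] \<open>vec_monomial x a1 \<le> v\<close> \<open>vec_monomial x a2 \<le> v\<close> by blast+
  ultimately have "real (binomial_height (m1, m2, a1, a2) + 1) \<le> 4 * v ^ L"
    by (simp add: binomial_height_def)
  then show ?thesis unfolding binomial_weight_def by (intro le_imp_inverse_le power_mono) auto
qed

lemma bohr_condition_primes_plus:
  fixes x :: "real^'n::finite"
  assumes x: "\<And>i. x$i > 1" and c: "c > 0" "c \<le> 1"
    and hc: "\<And>T. nondegenerate_binomial T \<Longrightarrow> c * binomial_weight T \<le> \<bar>binomial_value x T\<bar>"
  shows "bohr_condition primes_plus_index (primes_plus x)"
proof -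
  let ?B = "beurling_integers primes_plus_index (primes_plus x)"
  let ?nu = "beurling_nu primes_plus_index (primes_plus x)"
  define E where "E = 2 * CARD('n) + 4"
  define d where "d = Min (range (\<lambda>i. x$i))"
  have d: "d > 1" unfolding d_def using x by (subst Min_gr_iff) auto
  have xd: "x$i \<ge> d" for i unfolding d_def by (rule Min_le) auto
  obtain L where L: "2 < d ^ L" using real_arch_pow[OF d] by blast
  then have "L \<ge> 1" by (cases L) auto
  have fin: "finite {b\<in>?B. b \<le> T}" for T using finite_beurling_integers_primes_plus_le x by blast
  note unb = beurling_integers_primes_plus_unbounded
  have "c / 4 ^ E * ?nu (Suc n) powr (- real (L * E)) \<le> ?nu (Suc n) - ?nu n" if n: "n \<ge> 1" for n
  proof -
    obtain m1 a1 where m1: "m1 \<ge> 1" "?nu n = real m1 * vec_monomial x a1"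
      using beurling_integers_primes_plus_form beurling_nu_mem[OF fin unb n] by blast
    obtain m2 a2 where m2: "m2 \<ge> 1" "?nu (Suc n) = real m2 * vec_monomial x a2"
      using beurling_integers_primes_plus_form beurling_nu_mem[OF fin unb, of "Suc n"] by fastforce
    define v where "v = ?nu (Suc n)"
    have lt: "real m1 * vec_monomial x a1 < real m2 * vec_monomial x a2"
      using beurling_nu_less_Suc[OF fin unb n] m1 m2 by simp
    have "v > 0" using m2 vec_monomial_ge_1[of x a2] x by (simp add: v_def less_imp_le)
    have "v powr real (L * E) = (v ^ L) ^ E" using \<open>v > 0\<close> by (simp only: powr_realpow power_mult)
    then have "c / 4 ^ E * v powr (- real (L * E)) = c * inverse ((4 * v ^ L) ^ E)"
      by (simp add: powr_minus power_mult_distrib divide_inverse inverse_mult_distrib)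
    also have "\<dots> \<le> c * binomial_weight (m1, m2, a1, a2)"
      using binomial_weight_ge_power[OF xd _ _ \<open>L \<ge> 1\<close> m1(1) m2(1), where v=v] d L lt c m2
      by (intro mult_left_mono) (auto simp: E_def v_def)
    also have "\<dots> \<le> v - ?nu n"
      using binomial_weight_le_gap[OF _ c hc m1(1) m2(1) lt] x m1 m2 by (simp add: v_def less_imp_le)
    finally show ?thesis by (simp add: v_def)
  qed
  moreover have "c / 4 ^ E > 0" "real (L * E) > 0" using c \<open>L \<ge> 1\<close> by (auto simp: E_def)
  ultimately show ?thesis unfolding bohr_condition_def by blast
qed

theorem theorem1p1:
  shows "AE x in (lborel :: (real ^ 'n) measure).
           (\<forall>i. x $ i > 1) \<longrightarrow>
             beurling_prime_system primes_plus_index (primes_plus x) \<and>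
             bohr_condition primes_plus_index (primes_plus x)"
  using AE_binomial_lower_bound
proof eventually_elim
  case (elim x)
  show ?case
  proof
    assume x: "\<forall>i. x $ i > 1"
    with elim obtain c where c: "c > 0" "c \<le> 1"
      and hc: "\<And>T. nondegenerate_binomial T \<Longrightarrow> c * binomial_weight T \<le> \<bar>binomial_value x T\<bar>"
      by blast
    have "binomial_value x T \<noteq> 0" if "nondegenerate_binomial T" for T
      using hc[OF that] c binomial_weight_pos[of T] by (auto simp: mult_le_0_iff)
    with x c hc show "beurling_prime_system primes_plus_index (primes_plus x) \<and>
        bohr_condition primes_plus_index (primes_plus x)"
      by (simp add: beurling_prime_system_primes_plus bohr_condition_primes_plus)
  qed
qed

end
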